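(* Let $n\ge1$ and $\delta\in(0,1)$, and set $\alpha=(1+\delta)/2$. No secret-key multi-message code over the binary alphabet $\{0,1\}$ with codeword space $\{0,1\}^n$ satisfies both soundness and $\mathcal{F}^{\mathrm{ind}}_{\alpha n}$-error correction.
   Context: A secret-key multi-message code with message space $\Sigma^m$ (nonempty) and codeword space $\Sigma^n$ is a triple of polynomial-time algorithms $\Gamma=(\mathsf{KGen},\mathsf{Enc},\mathsf{Dec})$: $\mathsf{KGen}(1^\lambda)$ is randomized and outputs $sk$; $\mathsf{Enc}(sk,\mu)$ (possibly randomized), for $\mu\in\Sigma^m$, outputs $\gamma\in\Sigma^n$; $\mathsf{Dec}(sk,\gamma)$ is deterministic and outputs either a message in $\Sigma^m$ or one of the symbols $\mathtt{invalid},\mathtt{tampered}$. A function $\nu(\lambda)$ is negligible, written $\mathsf{negl}(\lambda)$, if $\nu(\lambda)=o(\lambda^{-c})$ for every $c>0$. Soundness: for every fixed $\hat\gamma\in\Sigma^n$, $\Pr[\mathsf{Dec}(sk,\hat\gamma)\neq\mathtt{invalid}: sk\leftarrow\mathsf{KGen}(1^\lambda)]\le\mathsf{negl}(\lambda)$. $\mathcal{F}$-error correction, for a family $\mathcal{F}$ of (possibly randomized) functions $f:\Sigma^n\to\Sigma^n$: for all $f\in\mathcal{F}$ and all $\mu\in\Sigma^m$, with $sk\leftarrow\mathsf{KGen}(1^\lambda)$, $\gamma\leftarrow\mathsf{Enc}(sk,\mu)$, $\tilde\gamma\leftarrow f(\gamma)$, we have $\Pr[\mathsf{Dec}(sk,\tilde\gamma)\neq\mu\wedge\tilde\gamma\neq\gamma]\le\mathsf{negl}(\lambda)$.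 $\mathcal{F}^{\mathrm{ind}}_{\alpha n}$ denotes the family of independent-tampering functions with rate $\alpha$: randomized length-preserving maps $f:\Sigma^n\to\Sigma^n$ that act independently on each coordinate, each coordinate being modified with probability at most $\alpha$. In particular (for $\Sigma=\{0,1\}$) it contains the map that, independently for each position $i$, replaces $\gamma_i$ by a uniformly random bit with probability $1/2$ and leaves it unchanged with probability $1/2$. *)

theory Defs
  imports "HOL-Probability.Probability" "HOL-Library.Landau_Symbols"
begin

text \<open>Alphabet: bool. Words of length n over {0,1} are bool lists of length n.\<close>

datatype dec_out = Msg "bool list" | Invalid | Tampered

definition negl :: "(nat \<Rightarrow> real) \<Rightarrow> bool" where
  "negl \<nu> \<longleftrightarrow> (\<forall>c::real. c > 0 \<longrightarrow> \<nu> \<in> o(\<lambda>x. real x powr (- c)))"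

fun coord_apply :: "(nat \<Rightarrow> bool \<Rightarrow> bool pmf) \<Rightarrow> nat \<Rightarrow> bool list \<Rightarrow> bool list pmf" where
  "coord_apply g i0 [] = return_pmf []"
| "coord_apply g i0 (b # bs) =
     bind_pmf (g i0 b) (\<lambda>b'. bind_pmf (coord_apply g (Suc i0) bs) (\<lambda>bs'. return_pmf (b' # bs')))"

definition tamper_ind :: "real \<Rightarrow> nat \<Rightarrow> (bool list \<Rightarrow> bool list pmf) set" where
  "tamper_ind \<alpha> n = {f. \<exists>g :: nat \<Rightarrow> bool \<Rightarrow> bool pmf.
       (\<forall>i<n. \<forall>b. measure_pmf.prob (g i b) {b'. b' \<noteq> b} \<le> \<alpha>) \<and>
       (\<forall>\<gamma>. length \<gamma> = n \<longrightarrow> f \<gamma> = coord_apply g 0 \<gamma>)}"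

definition is_code ::
  "(nat \<Rightarrow> nat) \<Rightarrow> (nat \<Rightarrow> nat) \<Rightarrow> (nat \<Rightarrow> 'k pmf) \<Rightarrow> (nat \<Rightarrow> 'k \<Rightarrow> bool list \<Rightarrow> bool list pmf)
    \<Rightarrow> (nat \<Rightarrow> 'k \<Rightarrow> bool list \<Rightarrow> dec_out) \<Rightarrow> bool" where
  "is_code m n KGen Enc Dec \<longleftrightarrow>
     (\<forall>s sk \<mu>. length \<mu> = m s \<longrightarrow> (\<forall>\<gamma> \<in> set_pmf (Enc s sk \<mu>). length \<gamma> = n s)) \<and>
     (\<forall>s sk \<gamma> \<mu>. Dec s sk \<gamma> = Msg \<mu> \<longrightarrow> length \<mu> = m s)"

definition sound ::
  "(nat \<Rightarrow> nat) \<Rightarrow> (nat \<Rightarrow> 'k pmf) \<Rightarrow> (nat \<Rightarrow> 'k \<Rightarrow> bool list \<Rightarrow> dec_out) \<Rightarrow> bool" where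
  "sound n KGen Dec \<longleftrightarrow>
     (\<forall>\<gamma>h :: nat \<Rightarrow> bool list. (\<forall>s. length (\<gamma>h s) = n s) \<longrightarrow>
        negl (\<lambda>s. measure_pmf.prob (KGen s) {sk. Dec s sk (\<gamma>h s) \<noteq> Invalid}))"

definition error_correcting ::
  "(nat \<Rightarrow> (bool list \<Rightarrow> bool list pmf) set) \<Rightarrow> (nat \<Rightarrow> nat) \<Rightarrow> (nat \<Rightarrow> nat) \<Rightarrow>
   (nat \<Rightarrow> 'k pmf) \<Rightarrow> (nat \<Rightarrow> 'k \<Rightarrow> bool list \<Rightarrow> bool list pmf)
    \<Rightarrow> (nat \<Rightarrow> 'k \<Rightarrow> bool list \<Rightarrow> dec_out) \<Rightarrow> bool" where
  "error_correcting F m n KGen Enc Dec \<longleftrightarrow>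
     (\<forall>(f :: nat \<Rightarrow> bool list \<Rightarrow> bool list pmf) (\<mu> :: nat \<Rightarrow> bool list).
        (\<forall>s. f s \<in> F (n s)) \<longrightarrow> (\<forall>s. length (\<mu> s) = m s) \<longrightarrow>
        negl (\<lambda>s. measure_pmf.prob
           (bind_pmf (KGen s) (\<lambda>sk. bind_pmf (Enc s sk (\<mu> s)) (\<lambda>\<gamma>.
              bind_pmf (f s \<gamma>) (\<lambda>\<gamma>'. return_pmf (sk, \<gamma>, \<gamma>')))))
           {(sk, \<gamma>, \<gamma>'). Dec s sk \<gamma>' \<noteq> Msg (\<mu> s) \<and> \<gamma>' \<noteq> \<gamma>}))"

end

theory Submission
  imports Defs
begin

text \<open>Replace every bit of the codeword by a fresh fair coin. Each bit then changes with
  probability 1/2 \<le> \<alpha> (only this, not \<delta> < 1, is used), so this is an admissible tampering,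
  and the tampered word is uniformly random, independent of the key and of the codeword. It equals
  the codeword with probability at most 1/2. Otherwise error correction forces the decoder to
  output the message, in particular not to reject; but a word independent of the key is accepted
  with probability at most that of the worst fixed word, which is negligible by soundness. Hence
  two negligible quantities would sum to at least 1/2.\<close>

lemma negl_add:
  assumes "negl a" and "negl b"
  shows "negl (\<lambda>s. a s + b s)"
  using assms unfolding negl_def by (blast intro: sum_in_smallo)

lemma negl_imp_LIMSEQ_zero:
  assumes "negl \<nu>"
  shows "\<nu> \<longlonglongrightarrow> 0"
proof -
  have "\<nu> \<in> o(\<lambda>x. real x powr (-1))"
    using assms zero_less_one unfolding negl_def by blast
  also have "(\<lambda>x. real x powr (-1)) \<in> O(\<lambda>_. 1)"
    by (intro bigoI[of _ 1] eventually_mono[OF eventually_ge_at_top[of 1]])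
      (simp add: powr_minus_divide)
  finally show ?thesis
    using smalloD_tendsto[of \<nu> sequentially "\<lambda>_. 1"] by simp
qed

lemma ex_max_on_lists_length:
  fixes f :: "'a::finite list \<Rightarrow> 'b::linorder"
  shows "\<exists>x. length x = n \<and> (\<forall>y. length y = n \<longrightarrow> f y \<le> f x)"
proof -
  let ?W = "{xs :: 'a list. length xs = n}"
  have "finite ?W" and "?W \<noteq> {}"
    using finite_lists_length_eq[of "UNIV :: 'a set" n] by (auto intro: exI[of _ "replicate n undefined"])
  then have "Max (f ` ?W) \<in> f ` ?W" and "\<forall>y\<in>?W. f y \<le> Max (f ` ?W)"
    by auto
  then show ?thesis by force
qed

lemma sound_imp_uniformly_negl:
  assumes "sound n KGen Dec"
  obtains \<epsilon> where "negl \<epsilon>"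
    and "\<And>s x. length x = n s \<Longrightarrow> measure_pmf.prob (KGen s) {sk. Dec s sk x \<noteq> Invalid} \<le> \<epsilon> s"
proof -
  define acc where "acc s x = measure_pmf.prob (KGen s) {sk. Dec s sk x \<noteq> Invalid}" for s x
  have "\<forall>s. \<exists>x. length x = n s \<and> (\<forall>y. length y = n s \<longrightarrow> acc s y \<le> acc s x)"
    using ex_max_on_lists_length by blast
  then obtain worst where worst_length: "\<And>s. length (worst s) = n s"
    and worst_max: "\<And>s x. length x = n s \<Longrightarrow> acc s x \<le> acc s (worst s)" by metis
  have "negl (\<lambda>s. acc s (worst s))"
    using assms worst_length unfolding sound_def acc_def by blast
  with worst_max show ?thesis
    using that unfolding acc_def by blast
qed

lemma measure_bind_pmf_le:
  assumes "\<And>x. x \<in> set_pmf p \<Longrightarrow> measure_pmf.prob (f x) A \<le> c"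
  shows "measure_pmf.prob (bind_pmf p f) A \<le> c"
proof -
  obtain x0 where "x0 \<in> set_pmf p" using set_pmf_not_empty by fast
  then have "0 \<le> c" using assms measure_nonneg order_trans by blast
  have "emeasure (bind_pmf p f) A = (\<integral>\<^sup>+x. emeasure (f x) A \<partial>p)" by simp
  also have "\<dots> \<le> (\<integral>\<^sup>+x. ennreal c \<partial>p)"
    using assms by (intro nn_integral_mono_AE)
      (auto simp: AE_measure_pmf_iff measure_pmf.emeasure_eq_measure intro: ennreal_leI)
  also have "\<dots> = ennreal c" by (simp add: measure_pmf.emeasure_space_1)
  finally show ?thesis
    using \<open>0 \<le> c\<close> by (simp add: measure_pmf.emeasure_eq_measure)
qed

lemma length_coord_apply:
  "x \<in> set_pmf (coord_apply g i \<gamma>) \<Longrightarrow> length x = length \<gamma>"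
  by (induction \<gamma> arbitrary: i x) auto

lemma coord_apply_input_independent:
  "length \<gamma> = length \<gamma>' \<Longrightarrow> coord_apply (\<lambda>j _. h j) i \<gamma> = coord_apply (\<lambda>j _. h j) i \<gamma>'"
proof (induction \<gamma> arbitrary: \<gamma>' i)
  case (Cons b bs)
  then obtain b' bs' where "\<gamma>' = b' # bs'" and "length bs = length bs'"
    by (cases \<gamma>') auto
  with Cons.IH show ?case by simp
qed simp

lemma map_pmf_hd_coord_apply: "map_pmf hd (coord_apply g i (b # bs)) = g i b"
  by (simp add: map_bind_pmf map_pmf_def[symmetric] map_pmf_comp bind_return_pmf')

lemma measure_coord_apply_singleton_le:
  "measure_pmf.prob (coord_apply g i (b # bs)) {x} \<le> measure_pmf.prob (g i b) {hd x}"
proof -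
  have "measure_pmf.prob (coord_apply g i (b # bs)) {x}
      \<le> measure_pmf.prob (coord_apply g i (b # bs)) (hd -` {hd x})"
    by (rule measure_pmf.finite_measure_mono) auto
  also have "\<dots> = measure_pmf.prob (map_pmf hd (coord_apply g i (b # bs))) {hd x}"
    by simp
  finally show ?thesis by (simp only: map_pmf_hd_coord_apply)
qed

lemma coin_tampering_in_tamper_ind:
  assumes "1/2 \<le> \<alpha>"
  shows "coord_apply (\<lambda>_ _. bernoulli_pmf (1/2)) 0 \<in> tamper_ind \<alpha> n"
proof -
  have "measure_pmf.prob (bernoulli_pmf (1/2)) {b'. b' \<noteq> b} \<le> \<alpha>" for b
  proof -
    have "{b'. b' \<noteq> b} = {\<not> b}" by auto
    with assms show ?thesis by (simp add: measure_pmf_single)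
  qed
  then show ?thesis
    unfolding tamper_ind_def by (auto intro!: exI[of _ "\<lambda>_ _. bernoulli_pmf (1/2)"])
qed

lemma decoding_error_oblivious_tampering:
  fixes K :: "'k pmf" and E :: "'k \<Rightarrow> 'w pmf" and R :: "'w pmf"
    and D :: "'k \<Rightarrow> 'w \<Rightarrow> dec_out"
  assumes hit: "\<And>x. measure_pmf.prob R {x} \<le> 1/2"
    and accept: "\<And>x. x \<in> set_pmf R \<Longrightarrow> measure_pmf.prob K {sk. D sk x \<noteq> Invalid} \<le> \<epsilon>"
  shows "1/2 \<le> measure_pmf.prob
      (bind_pmf K (\<lambda>sk. bind_pmf (E sk) (\<lambda>\<gamma>. bind_pmf R (\<lambda>\<gamma>'. return_pmf (sk, \<gamma>, \<gamma>')))))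
      {(sk, \<gamma>, \<gamma>'). D sk \<gamma>' \<noteq> Msg \<mu> \<and> \<gamma>' \<noteq> \<gamma>} + \<epsilon>"
    (is "_ \<le> measure_pmf.prob ?J ?Err + _")
proof -
  define Acc where "Acc = {(sk, \<gamma> :: 'w, \<gamma>'). D sk \<gamma>' \<noteq> Invalid}"
  define Hit where "Hit = {(sk :: 'k, \<gamma> :: 'w, \<gamma>'). \<gamma>' = \<gamma>}"
  have J: "?J = bind_pmf K (\<lambda>sk. bind_pmf (E sk) (\<lambda>\<gamma>. map_pmf (\<lambda>\<gamma>'. (sk, \<gamma>, \<gamma>')) R))"
    by (simp add: map_pmf_def)
  have "measure_pmf.prob ?J Hit \<le> 1/2"
    unfolding J
  proof (intro measure_bind_pmf_le)
    fix sk \<gamma>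
    have "(\<lambda>\<gamma>'. (sk, \<gamma>, \<gamma>')) -` Hit = {\<gamma>}" by (auto simp: Hit_def)
    then show "measure_pmf.prob (map_pmf (\<lambda>\<gamma>'. (sk, \<gamma>, \<gamma>')) R) Hit \<le> 1/2"
      using hit by simp
  qed
  moreover have "measure_pmf.prob ?J Acc \<le> \<epsilon>"
  proof -
    let ?key_word = "\<lambda>(sk, \<gamma> :: 'w, \<gamma>'). (sk, \<gamma>')"
    have "map_pmf ?key_word ?J = bind_pmf K (\<lambda>sk. map_pmf (Pair sk) R)"
      unfolding J by (simp add: map_bind_pmf map_pmf_comp)
    also have "\<dots> = bind_pmf R (\<lambda>\<gamma>'. map_pmf (\<lambda>sk. (sk, \<gamma>')) K)"
      unfolding map_pmf_def by (rule bind_commute_pmf)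
    finally have key_word: "map_pmf ?key_word ?J = \<dots>" .
    have "Acc = ?key_word -` {(sk, \<gamma>'). D sk \<gamma>' \<noteq> Invalid}"
      by (auto simp: Acc_def)
    then have "measure_pmf.prob ?J Acc
        = measure_pmf.prob (map_pmf ?key_word ?J) {(sk, \<gamma>'). D sk \<gamma>' \<noteq> Invalid}"
      by simp
    also have "\<dots> = measure_pmf.prob (bind_pmf R (\<lambda>\<gamma>'. map_pmf (\<lambda>sk. (sk, \<gamma>')) K))
        {(sk, \<gamma>'). D sk \<gamma>' \<noteq> Invalid}"
      unfolding key_word ..
    also have "\<dots> \<le> \<epsilon>"
      using accept by (intro measure_bind_pmf_le) (simp add: vimage_def)
    finally show ?thesis .
  qed
  moreover have "1 \<le> measure_pmf.prob ?J ?Err + measure_pmf.prob ?J Acc + measure_pmf.prob ?J Hit"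
  proof -
    have "UNIV = ?Err \<union> Acc \<union> Hit" by (auto simp: Acc_def Hit_def)
    then have "1 = measure_pmf.prob ?J (?Err \<union> Acc \<union> Hit)"
      by (metis measure_pmf.prob_space space_measure_pmf)
    also have "\<dots> \<le> measure_pmf.prob ?J (?Err \<union> Acc) + measure_pmf.prob ?J Hit"
      by (rule measure_Un_le) simp_all
    also have "\<dots> \<le> measure_pmf.prob ?J ?Err + measure_pmf.prob ?J Acc + measure_pmf.prob ?J Hit"
      using measure_Un_le[of ?Err ?J Acc] by simp
    finally show ?thesis .
  qed
  ultimately show ?thesis by linarith
qed

lemma decoding_error_coin_tampering:
  fixes K :: "'k pmf" and E :: "'k \<Rightarrow> bool list pmf" and D :: "'k \<Rightarrow> bool list \<Rightarrow> dec_out"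
  assumes "1 \<le> n"
    and codeword_length: "\<And>sk \<gamma>. \<gamma> \<in> set_pmf (E sk) \<Longrightarrow> length \<gamma> = n"
    and accept: "\<And>x. length x = n \<Longrightarrow> measure_pmf.prob K {sk. D sk x \<noteq> Invalid} \<le> \<epsilon>"
  shows "1/2 \<le> measure_pmf.prob
      (bind_pmf K (\<lambda>sk. bind_pmf (E sk) (\<lambda>\<gamma>.
         bind_pmf (coord_apply (\<lambda>_ _. bernoulli_pmf (1/2)) 0 \<gamma>) (\<lambda>\<gamma>'. return_pmf (sk, \<gamma>, \<gamma>')))))
      {(sk, \<gamma>, \<gamma>'). D sk \<gamma>' \<noteq> Msg \<mu> \<and> \<gamma>' \<noteq> \<gamma>} + \<epsilon>"
proof -
  let ?coin = "\<lambda>_ _. bernoulli_pmf (1/2)"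
  obtain k where n: "n = Suc k" using \<open>1 \<le> n\<close> by (cases n) auto
  define R where "R = coord_apply ?coin 0 (replicate n False)"
  have "bind_pmf K (\<lambda>sk. bind_pmf (E sk) (\<lambda>\<gamma>.
          bind_pmf (coord_apply ?coin 0 \<gamma>) (\<lambda>\<gamma>'. return_pmf (sk, \<gamma>, \<gamma>'))))
      = bind_pmf K (\<lambda>sk. bind_pmf (E sk) (\<lambda>\<gamma>. bind_pmf R (\<lambda>\<gamma>'. return_pmf (sk, \<gamma>, \<gamma>'))))"
    unfolding R_def
    by (intro bind_pmf_cong refl) (simp add: codeword_length coord_apply_input_independent)
  moreover have "measure_pmf.prob R {x} \<le> 1/2" for x
    using measure_coord_apply_singleton_le[of ?coin 0 False "replicate k False" x]
    by (simp add: R_def n measure_pmf_single)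
  moreover have "measure_pmf.prob K {sk. D sk x \<noteq> Invalid} \<le> \<epsilon>" if "x \<in> set_pmf R" for x
    using that accept length_coord_apply unfolding R_def by fastforce
  ultimately show ?thesis
    by (simp only:) (rule decoding_error_oblivious_tampering)
qed

theorem mainTheorem4:
  fixes \<delta> :: real
    and m n :: "nat \<Rightarrow> nat"
    and KGen :: "nat \<Rightarrow> 'k pmf"
    and Enc :: "nat \<Rightarrow> 'k \<Rightarrow> bool list \<Rightarrow> bool list pmf"
    and Dec :: "nat \<Rightarrow> 'k \<Rightarrow> bool list \<Rightarrow> dec_out"
  assumes "0 < \<delta>" and "\<delta> < 1"
    and "\<forall>s. n s \<ge> 1"
    and "is_code m n KGen Enc Dec"
  shows "\<not> (sound n KGen Dec \<and>
            error_correcting (tamper_ind ((1 + \<delta>) / 2)) m n KGen Enc Dec)"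
proof
  assume "sound n KGen Dec \<and> error_correcting (tamper_ind ((1 + \<delta>) / 2)) m n KGen Enc Dec"
  then have sound: "sound n KGen Dec"
    and correcting: "error_correcting (tamper_ind ((1 + \<delta>) / 2)) m n KGen Enc Dec" by auto
  obtain \<epsilon> where "negl \<epsilon>"
    and accept: "\<And>s x. length x = n s \<Longrightarrow> measure_pmf.prob (KGen s) {sk. Dec s sk x \<noteq> Invalid} \<le> \<epsilon> s"
    using sound_imp_uniformly_negl[OF sound] by blast
  define \<mu> where "\<mu> s = replicate (m s) False" for s
  define err where "err s = measure_pmf.prob
      (bind_pmf (KGen s) (\<lambda>sk. bind_pmf (Enc s sk (\<mu> s)) (\<lambda>\<gamma>.
         bind_pmf (coord_apply (\<lambda>_ _. bernoulli_pmf (1/2)) 0 \<gamma>) (\<lambda>\<gamma>'. return_pmf (sk, \<gamma>, \<gamma>')))))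
      {(sk, \<gamma>, \<gamma>'). Dec s sk \<gamma>' \<noteq> Msg (\<mu> s) \<and> \<gamma>' \<noteq> \<gamma>}" for s
  have "negl err"
    using correcting coin_tampering_in_tamper_ind \<open>0 < \<delta>\<close>
    unfolding error_correcting_def err_def \<mu>_def by auto
  with \<open>negl \<epsilon>\<close> have "(\<lambda>s. err s + \<epsilon> s) \<longlonglongrightarrow> 0"
    by (intro negl_imp_LIMSEQ_zero negl_add)
  moreover have "1/2 \<le> err s + \<epsilon> s" for s
    unfolding err_def
  proof (rule decoding_error_coin_tampering)
    show "1 \<le> n s" using assms(3) by simp
    have "length (\<mu> s) = m s" by (simp add: \<mu>_def)
    then show "length \<gamma> = n s" if "\<gamma> \<in> set_pmf (Enc s sk (\<mu> s))" for sk \<gamma>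
      using that \<open>is_code m n KGen Enc Dec\<close> unfolding is_code_def by blast
  qed (rule accept)
  ultimately have "(1/2 :: real) \<le> 0"
    by (intro LIMSEQ_le_const) auto
  then show False by simp
qed

end
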